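(* Let $\Theta$ be a causal theory over $\mathfrak L$, let $\phi,\psi\in\mathfrak L$, and let $\Theta'=\Theta\cup\{\phi\triangleright\psi\}$. Write $\Box$ for the modal operator and $\vdash_\Box$ for derivability in $\mathbf S_\Theta$ (language $\mathcal L_\Box$), and $\Box'$, $\vdash_{\Box'}$ for the corresponding operator and derivability in $\mathbf S_{\Theta'}$ (language $\mathcal L_{\Box'}$). Define $\alpha:\mathcal L_{\Box'}\to\mathcal L_\Box$ by $\alpha(a)=a$ for atoms, $\alpha$ commuting with $\neg,\wedge,\vee,\to$ (and fixing $\top,\perp$), and $\alpha(\Box' p)=(\phi\wedge\Box(\psi\to\alpha(p)))\vee\Box\alpha(p)$. Then for all $\Gamma,\Delta\subseteq\mathcal L_{\Box'}$, $\Gamma\vdash_{\Box'}\Delta$ is derivable in $\mathbf S_{\Theta'}$ if and only if $\alpha(\Gamma)\vdash_\Box\alpha(\Delta)$ is derivable in $\mathbf S_\Theta$.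
   Context: $\mathfrak L$ is a classical propositional language. A causal rule is $\phi\triangleright\psi$ with $\phi,\psi\in\mathfrak L$; a causal theory $\Theta$ is a set of causal rules. For a causal theory $\Theta$, the language $\mathcal L_\Box$ is generated by $\mathfrak L$ and a unary operator $\Box$ (associated with $\Theta$). The sequent calculus $\mathbf S_\Theta$ derives sequents $\Gamma\vdash_\Box\Delta$ (collections possibly infinite; derivations well-founded, possibly infinitely branching) via: axiom $p\vdash_\Box p$; $\perp\vdash_\Box$; $\vdash_\Box\top$; weakening and contraction on both sides; classical two-sided LK rules for $\neg,\wedge,\vee,\to$ with shared contexts; $\Box$R: if $\phi_1\triangleright\psi_1,\dots,\phi_k\triangleright\psi_k\in\Theta$ and $\psi_1,\dots,\psi_k\vdash_\Box p$ is derivable, from $\Gamma\vdash_\Box\phi_1\wedge\dots\wedge\phi_k,\Delta$ infer $\Gamma\vdash_\Box\Box p,\Delta$ (empty conjunction $=\top$); $\Box$L: letting $\{S_j\}_{j\in J}$ be all finite $S_j\subseteq\Theta$ with $\{\psi:\phi\triangleright\psi\in S_j\}\vdash_\Box p$ derivable, from $\Gamma,\{\phi:\phi\triangleright\psi\in S_j\}\vdash_\Box\Delta$ for all $j\in J$ infer $\Gamma,\Box p\vdash_\Box\Delta$; multicut: from $\Gamma\vdash_\Box p^m,\Delta$ and $\Gamma',p^n\vdash_\Box\Delta'$ ($m,n>0$) infer $\Gamma,\Gamma'\vdash_\Box\Delta,\Delta'$. The calculus $\mathbf S_{\Theta'}$ is defined identically with $\Theta'$ and a new operator $\Box'$ in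 place of $\Theta$ and $\Box$. *)

theory Defs
  imports Main
begin

text \<open>The same datatype serves both as the language with Box and the
language with Box' (the two languages are isomorphic; which calculus is meant is
determined by the causal theory that is used).\<close>

datatype 'a fm =
    Atom 'a
  | Top
  | Bot
  | Neg "'a fm"
  | Conj "'a fm" "'a fm"
  | Disj "'a fm" "'a fm"
  | Impl "'a fm" "'a fm"
  | Box "'a fm"

text \<open>The classical propositional language = the Box-free formulas.\<close>

fun boxfree :: "'a fm \<Rightarrow> bool" where
  "boxfree (Atom a) = True"
| "boxfree Top = True"
| "boxfree Bot = True"
| "boxfree (Neg A) = boxfree A"
| "boxfree (Conj A B) = (boxfree A \<and> boxfree B)"
| "boxfree (Disj A B) = (boxfree A \<and> boxfree B)"
| "boxfree (Impl A B) = (boxfree A \<and> boxfree B)"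
| "boxfree (Box A) = False"

text \<open>A causal rule phi |> psi is the pair (phi, psi); a causal theory is a set of such pairs.\<close>

type_synonym 'a causal_theory = "('a fm \<times> 'a fm) set"

definition causal_theory :: "'a causal_theory \<Rightarrow> bool" where
  "causal_theory Th \<longleftrightarrow> (\<forall>(a, b) \<in> Th. boxfree a \<and> boxfree b)"

fun conjs :: "'a fm list \<Rightarrow> 'a fm" where
  "conjs [] = Top"
| "conjs [x] = x"
| "conjs (x # y # xs) = Conj x (conjs (y # xs))"

text \<open>Sequents are pairs of (possibly infinite) sets of
formulas; with weakening and contraction present this is the standard set reading of
the collections.  The side conditions of the Box rules ("... is derivable") refer to the
derivability relation of S_Th itself; since this reference is non-monotone, the rules are
defined relative to a given relation Side, and the derivability relation of S_Th is then
characterised as a fixed point (see is_derivability below).  Derivations generated by an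
inductive definition are well-founded and may be infinitely branching (rule box_L).\<close>

inductive calc :: "'a causal_theory \<Rightarrow> ('a fm set \<Rightarrow> 'a fm set \<Rightarrow> bool)
                    \<Rightarrow> 'a fm set \<Rightarrow> 'a fm set \<Rightarrow> bool"
  for Th :: "'a causal_theory" and Side :: "'a fm set \<Rightarrow> 'a fm set \<Rightarrow> bool" where
  ax: "calc Th Side {p} {p}"
| botL: "calc Th Side {Bot} {}"
| topR: "calc Th Side {} {Top}"
| weak: "calc Th Side \<Gamma> \<Delta> \<Longrightarrow> \<Gamma> \<subseteq> \<Gamma>' \<Longrightarrow> \<Delta> \<subseteq> \<Delta>' \<Longrightarrow> calc Th Side \<Gamma>' \<Delta>'"
| negL: "calc Th Side \<Gamma> (insert A \<Delta>) \<Longrightarrow> calc Th Side (insert (Neg A) \<Gamma>) \<Delta>"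
| negR: "calc Th Side (insert A \<Gamma>) \<Delta> \<Longrightarrow> calc Th Side \<Gamma> (insert (Neg A) \<Delta>)"
| conjL: "calc Th Side (insert A (insert B \<Gamma>)) \<Delta> \<Longrightarrow> calc Th Side (insert (Conj A B) \<Gamma>) \<Delta>"
| conjR: "calc Th Side \<Gamma> (insert A \<Delta>) \<Longrightarrow> calc Th Side \<Gamma> (insert B \<Delta>)
          \<Longrightarrow> calc Th Side \<Gamma> (insert (Conj A B) \<Delta>)"
| disjL: "calc Th Side (insert A \<Gamma>) \<Delta> \<Longrightarrow> calc Th Side (insert B \<Gamma>) \<Delta>
          \<Longrightarrow> calc Th Side (insert (Disj A B) \<Gamma>) \<Delta>"
| disjR: "calc Th Side \<Gamma> (insert A (insert B \<Delta>)) \<Longrightarrow> calc Th Side \<Gamma> (insert (Disj A B) \<Delta>)"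
| implL: "calc Th Side \<Gamma> (insert A \<Delta>) \<Longrightarrow> calc Th Side (insert B \<Gamma>) \<Delta>
          \<Longrightarrow> calc Th Side (insert (Impl A B) \<Gamma>) \<Delta>"
| implR: "calc Th Side (insert A \<Gamma>) (insert B \<Delta>) \<Longrightarrow> calc Th Side \<Gamma> (insert (Impl A B) \<Delta>)"
| boxR: "set rs \<subseteq> Th \<Longrightarrow> Side (set (map snd rs)) {p}
          \<Longrightarrow> calc Th Side \<Gamma> (insert (conjs (map fst rs)) \<Delta>)
          \<Longrightarrow> calc Th Side \<Gamma> (insert (Box p) \<Delta>)"
| boxL: "(\<And>S. finite S \<Longrightarrow> S \<subseteq> Th \<Longrightarrow> Side (snd ` S) {p} \<Longrightarrow> calc Th Side (\<Gamma> \<union> fst ` S) \<Delta>)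
          \<Longrightarrow> calc Th Side (insert (Box p) \<Gamma>) \<Delta>"
| cut: "calc Th Side \<Gamma> (insert p \<Delta>) \<Longrightarrow> calc Th Side (insert p \<Gamma>') \<Delta>'
          \<Longrightarrow> calc Th Side (\<Gamma> \<union> \<Gamma>') (\<Delta> \<union> \<Delta>')"

text \<open>D is the derivability relation of S_Th: a sequent is derivable iff it has a
(well-founded) derivation in which the side conditions of the Box rules are themselves
derivable sequents.\<close>

definition is_derivability :: "'a causal_theory \<Rightarrow> ('a fm set \<Rightarrow> 'a fm set \<Rightarrow> bool) \<Rightarrow> bool" where
  "is_derivability Th D \<longleftrightarrow> D = calc Th D"

fun alpha :: "'a fm \<Rightarrow> 'a fm \<Rightarrow> 'a fm \<Rightarrow> 'a fm" where
  "alpha \<phi> \<psi> (Atom a) = Atom a"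
| "alpha \<phi> \<psi> Top = Top"
| "alpha \<phi> \<psi> Bot = Bot"
| "alpha \<phi> \<psi> (Neg A) = Neg (alpha \<phi> \<psi> A)"
| "alpha \<phi> \<psi> (Conj A B) = Conj (alpha \<phi> \<psi> A) (alpha \<phi> \<psi> B)"
| "alpha \<phi> \<psi> (Disj A B) = Disj (alpha \<phi> \<psi> A) (alpha \<phi> \<psi> B)"
| "alpha \<phi> \<psi> (Impl A B) = Impl (alpha \<phi> \<psi> A) (alpha \<phi> \<psi> B)"
| "alpha \<phi> \<psi> (Box p) =
     Disj (Conj \<phi> (Box (Impl \<psi> (alpha \<phi> \<psi> p)))) (Box (alpha \<phi> \<psi> p))"

end

theory Submission
  imports Defs
begin

text \<open>The derivability relations D (for Theta) and D' (for Theta plus phi |> psi) are arbitrary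
fixed points of the calculus "calc", whose Box rules refer back to D itself.  The proof has
three layers.

  1. A cut-free calculus "cf" in which every rule keeps its principal formula in the
     context and is described uniformly by the premise families of "left_rule" and
     "right_rule".  It is sound for "calc", and cut is admissible in it for causal
     theories (induction on box depth, then size, of the cut formula).  Hence
     D Gamma Delta holds iff the sequent has a cut-free derivation.
  2. Forward translation: a cut-free Theta'-derivation of Gamma |- Delta is turned into a
     cut-free Theta-derivation of alpha Gamma |- alpha Delta, rule by rule.
  3. Backward translation: by induction on a cut-free Theta-derivation whose sequents
     "represent" Theta'-sequents (the disjuncts of alpha (Box' q) may have been split
     off, and decomposed Box formulas on the left are witnessed by rule sets).
Both translations need the side conditions of the Box rules to agree:
D' B {q} iff D B {alpha q} for Box-free B.  This is proved by induction on the box depth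
of q, using the two translations on formulas of smaller depth; the theorem follows.\<close>

text \<open>A rule instance for a principal formula A is a set of
premises; a premise (X, Y) stands for the sequent obtained by adding X to the antecedent
and Y to the succedent.\<close>

fun left_rule :: "'a causal_theory \<Rightarrow> ('a fm set \<Rightarrow> 'a fm set \<Rightarrow> bool) \<Rightarrow> 'a fm
                    \<Rightarrow> ('a fm set \<times> 'a fm set) set set" where
  "left_rule Th Side Bot = {{}}"
| "left_rule Th Side (Neg A) = {{({}, {A})}}"
| "left_rule Th Side (Conj A B) = {{({A, B}, {})}}"
| "left_rule Th Side (Disj A B) = {{({A}, {}), ({B}, {})}}"
| "left_rule Th Side (Impl A B) = {{({}, {A}), ({B}, {})}}"
| "left_rule Th Side (Box p) = {{(fst ` S, {}) | S. finite S \<and> S \<subseteq> Th \<and> Side (snd ` S) {p}}}"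
| "left_rule Th Side _ = {}"

fun right_rule :: "'a causal_theory \<Rightarrow> ('a fm set \<Rightarrow> 'a fm set \<Rightarrow> bool) \<Rightarrow> 'a fm
                    \<Rightarrow> ('a fm set \<times> 'a fm set) set set" where
  "right_rule Th Side Top = {{}}"
| "right_rule Th Side (Neg A) = {{({A}, {})}}"
| "right_rule Th Side (Conj A B) = {{({}, {A}), ({}, {B})}}"
| "right_rule Th Side (Disj A B) = {{({}, {A, B})}}"
| "right_rule Th Side (Impl A B) = {{({A}, {B})}}"
| "right_rule Th Side (Box p) =
     {{({}, {conjs (map fst rs)})} | rs. set rs \<subseteq> Th \<and> Side (set (map snd rs)) {p}}"
| "right_rule Th Side _ = {}"

text \<open>Cut-free derivability.  Principal formulas stay in the context, so contraction
is built in and weakening is admissible; derivations are well-founded and may branch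
infinitely (left Box rule).\<close>

inductive cf :: "'a causal_theory \<Rightarrow> ('a fm set \<Rightarrow> 'a fm set \<Rightarrow> bool)
                   \<Rightarrow> 'a fm set \<Rightarrow> 'a fm set \<Rightarrow> bool"
  for Th :: "'a causal_theory" and Side :: "'a fm set \<Rightarrow> 'a fm set \<Rightarrow> bool" where
  axiom: "A \<in> \<Gamma> \<Longrightarrow> A \<in> \<Delta> \<Longrightarrow> cf Th Side \<Gamma> \<Delta>"
| left: "A \<in> \<Gamma> \<Longrightarrow> P \<in> left_rule Th Side A
          \<Longrightarrow> (\<And>X Y. (X, Y) \<in> P \<Longrightarrow> cf Th Side (X \<union> \<Gamma>) (Y \<union> \<Delta>)) \<Longrightarrow> cf Th Side \<Gamma> \<Delta>"
| right: "A \<in> \<Delta> \<Longrightarrow> P \<in> right_rule Th Side A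
          \<Longrightarrow> (\<And>X Y. (X, Y) \<in> P \<Longrightarrow> cf Th Side (X \<union> \<Gamma>) (Y \<union> \<Delta>)) \<Longrightarrow> cf Th Side \<Gamma> \<Delta>"

lemma cf_weaken:
  "cf Th Side \<Gamma> \<Delta> \<Longrightarrow> \<Gamma> \<subseteq> \<Gamma>' \<Longrightarrow> \<Delta> \<subseteq> \<Delta>' \<Longrightarrow> cf Th Side \<Gamma>' \<Delta>'"
proof (induction arbitrary: \<Gamma>' \<Delta>' rule: cf.induct)
  case (axiom A \<Gamma> \<Delta>)
  then show ?case by (blast intro: cf.axiom)
next
  case (left A \<Gamma> P \<Delta>)
  show ?case
  proof (rule cf.left[of A \<Gamma>' P])
    fix X Y assume "(X, Y) \<in> P"
    then show "cf Th Side (X \<union> \<Gamma>') (Y \<union> \<Delta>')"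
      by (meson left.IH left.prems Un_mono order_refl)
  qed (use left in blast)+
next
  case (right A \<Delta> P \<Gamma>)
  show ?case
  proof (rule cf.right[of A \<Delta>' P])
    fix X Y assume "(X, Y) \<in> P"
    then show "cf Th Side (X \<union> \<Gamma>') (Y \<union> \<Delta>')"
      by (meson right.IH right.prems Un_mono order_refl)
  qed (use right in blast)+
qed

lemma cf_conj_left:
  "Conj A B \<in> \<Gamma> \<Longrightarrow> cf Th Side (insert A (insert B \<Gamma>)) \<Delta> \<Longrightarrow> cf Th Side \<Gamma> \<Delta>"
  by (rule cf.left[of "Conj A B" _ "{({A, B}, {})}"]) auto

lemma cf_disj_left:
  "Disj A B \<in> \<Gamma> \<Longrightarrow> cf Th Side (insert A \<Gamma>) \<Delta> \<Longrightarrow> cf Th Side (insert B \<Gamma>) \<Delta>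
   \<Longrightarrow> cf Th Side \<Gamma> \<Delta>"
  by (rule cf.left[of "Disj A B" _ "{({A}, {}), ({B}, {})}"]) auto

lemma cf_box_left:
  assumes "Box p \<in> \<Gamma>"
    and "\<And>S. finite S \<Longrightarrow> S \<subseteq> Th \<Longrightarrow> Side (snd ` S) {p} \<Longrightarrow> cf Th Side (fst ` S \<union> \<Gamma>) \<Delta>"
  shows "cf Th Side \<Gamma> \<Delta>"
  by (rule cf.left[OF assms(1), of "{(fst ` S, {}) | S. finite S \<and> S \<subseteq> Th \<and> Side (snd ` S) {p}}"])
    (use assms(2) in auto)

lemma cf_conj_right:
  "Conj A B \<in> \<Delta> \<Longrightarrow> cf Th Side \<Gamma> (insert A \<Delta>) \<Longrightarrow> cf Th Side \<Gamma> (insert B \<Delta>)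
   \<Longrightarrow> cf Th Side \<Gamma> \<Delta>"
  by (rule cf.right[of "Conj A B" _ "{({}, {A}), ({}, {B})}"]) auto

lemma cf_disj_right:
  "Disj A B \<in> \<Delta> \<Longrightarrow> cf Th Side \<Gamma> (insert A (insert B \<Delta>)) \<Longrightarrow> cf Th Side \<Gamma> \<Delta>"
  by (rule cf.right[of "Disj A B" _ "{({}, {A, B})}"]) auto

lemma cf_box_right:
  "Box p \<in> \<Delta> \<Longrightarrow> set rs \<subseteq> Th \<Longrightarrow> Side (set (map snd rs)) {p}
   \<Longrightarrow> cf Th Side \<Gamma> (insert (conjs (map fst rs)) \<Delta>) \<Longrightarrow> cf Th Side \<Gamma> \<Delta>"
  by (rule cf.right[of "Box p" _ "{({}, {conjs (map fst rs)})}"]) auto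

lemma cf_conjs_right: "set xs \<subseteq> \<Gamma> \<Longrightarrow> cf Th Side \<Gamma> (insert (conjs xs) \<Delta>)"
proof (induction xs arbitrary: \<Delta> rule: conjs.induct)
  case 1
  show ?case by (rule cf.right[of Top _ "{}"]) auto
next
  case (2 x)
  then show ?case by (intro cf.axiom[of x]) auto
next
  case (3 x y xs)
  let ?C = "conjs (x # y # xs)"
  have "cf Th Side \<Gamma> (insert x (insert ?C \<Delta>))" using "3.prems" by (intro cf.axiom[of x]) auto
  moreover have "cf Th Side \<Gamma> (insert (conjs (y # xs)) (insert ?C \<Delta>))" using "3.prems" "3.IH" by simp
  ultimately show ?case by (rule cf_conj_right[rotated]) simp
qed

lemma cf_conjs_left: "cf Th Side (set xs \<union> \<Gamma>) \<Delta> \<Longrightarrow> cf Th Side (insert (conjs xs) \<Gamma>) \<Delta>"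
proof (induction xs arbitrary: \<Gamma> rule: conjs.induct)
  case 1
  then show ?case by (rule cf_weaken) auto
next
  case (2 x)
  then show ?case by simp
next
  case (3 x y xs)
  let ?C = "conjs (x # y # xs)"
  have "cf Th Side (set (y # xs) \<union> insert x (insert ?C \<Gamma>)) \<Delta>"
    using "3.prems" by (rule cf_weaken) auto
  then have "cf Th Side (insert (conjs (y # xs)) (insert x (insert ?C \<Gamma>))) \<Delta>"
    by (rule "3.IH")
  then have "cf Th Side (insert x (insert (conjs (y # xs)) (insert ?C \<Gamma>))) \<Delta>"
    by (simp add: insert_commute)
  then show ?case by (rule cf_conj_left[rotated]) simp
qed

lemma cf_box_right_by_context:
  assumes "finite S" "S \<subseteq> Th" "Side (snd ` S) {q}" "fst ` S \<subseteq> \<Gamma>" "Box q \<in> \<Delta>"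
  shows "cf Th Side \<Gamma> \<Delta>"
proof -
  obtain rs where rs: "set rs = S" using finite_list[OF assms(1)] by blast
  have "cf Th Side \<Gamma> (insert (conjs (map fst rs)) \<Delta>)"
    by (rule cf_conjs_right) (use rs assms(4) in auto)
  then show ?thesis
    by (intro cf.right[OF assms(5), of "{({}, {conjs (map fst rs)})}"]) (use rs assms(2,3) in auto)
qed

text \<open>Soundness of cf for calc: every cf rule instance is a calc rule (up to weakening).\<close>

lemma left_rule_sound:
  assumes "P \<in> left_rule Th Side A" and "\<forall>(X, Y) \<in> P. calc Th Side (X \<union> insert A \<Gamma>) (Y \<union> \<Delta>)"
  shows "calc Th Side (insert A \<Gamma>) \<Delta>"
proof (cases A)
  case Bot
  then show ?thesis by (intro calc.weak[OF calc.botL]) auto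
next
  case (Neg B)
  then show ?thesis using assms calc.negL[of Th Side "insert A \<Gamma>" B \<Delta>] by (simp add: insert_commute)
next
  case (Conj B C)
  then show ?thesis using assms calc.conjL[of Th Side B C "insert A \<Gamma>" \<Delta>] by (simp add: insert_commute)
next
  case (Disj B C)
  then show ?thesis using assms calc.disjL[of Th Side B "insert A \<Gamma>" \<Delta> C] by (simp add: insert_commute)
next
  case (Impl B C)
  then show ?thesis using assms calc.implL[of Th Side "insert A \<Gamma>" B \<Delta> C] by (simp add: insert_commute)
next
  case (Box p)
  have "calc Th Side (insert A \<Gamma> \<union> fst ` S) \<Delta>"
    if "finite S" "S \<subseteq> Th" "Side (snd ` S) {p}" for S
  proof -
    have "(fst ` S, {}) \<in> P" using assms(1) that Box by auto
    then show ?thesis using assms(2) by (auto simp: Un_commute)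
  qed
  then show ?thesis using calc.boxL[of Th Side p "insert A \<Gamma>" \<Delta>] Box by simp
qed (use assms in simp_all)

lemma right_rule_sound:
  assumes "P \<in> right_rule Th Side A" and "\<forall>(X, Y) \<in> P. calc Th Side (X \<union> \<Gamma>) (Y \<union> insert A \<Delta>)"
  shows "calc Th Side \<Gamma> (insert A \<Delta>)"
proof (cases A)
  case Top
  then show ?thesis by (intro calc.weak[OF calc.topR]) auto
next
  case (Neg B)
  then show ?thesis using assms calc.negR[of Th Side B \<Gamma> "insert A \<Delta>"] by (simp add: insert_commute)
next
  case (Conj B C)
  then show ?thesis using assms calc.conjR[of Th Side \<Gamma> B "insert A \<Delta>" C] by (simp add: insert_commute)
next
  case (Disj B C)
  then show ?thesis using assms calc.disjR[of Th Side \<Gamma> B C "insert A \<Delta>"] by (simp add: insert_commute)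
next
  case (Impl B C)
  then show ?thesis using assms calc.implR[of Th Side B \<Gamma> C "insert A \<Delta>"] by (simp add: insert_commute)
next
  case (Box p)
  then obtain rs where rs: "set rs \<subseteq> Th" "Side (set (map snd rs)) {p}"
    and P: "P = {({}, {conjs (map fst rs)})}" using assms(1) by auto
  then have "calc Th Side \<Gamma> (insert (conjs (map fst rs)) (insert A \<Delta>))" using assms(2) by (simp add: insert_commute)
  then show ?thesis using calc.boxR[of rs Th Side p \<Gamma> "insert A \<Delta>"] rs Box by simp
qed (use assms in simp_all)

lemma cf_sound: "cf Th Side \<Gamma> \<Delta> \<Longrightarrow> calc Th Side \<Gamma> \<Delta>"
proof (induction rule: cf.induct)
  case (axiom A \<Gamma> \<Delta>)
  then show ?case by (intro calc.weak[OF calc.ax[of Th Side A]]) auto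
next
  case (left A \<Gamma> P \<Delta>)
  have \<Gamma>: "insert A \<Gamma> = \<Gamma>" using left.hyps(1) by blast
  show ?case using left_rule_sound[of P Th Side A \<Gamma> \<Delta>] left.hyps(2) left.IH unfolding \<Gamma> by blast
next
  case (right A \<Delta> P \<Gamma>)
  have \<Delta>: "insert A \<Delta> = \<Delta>" using right.hyps(1) by blast
  show ?case using right_rule_sound[of P Th Side A \<Gamma> \<Delta>] right.hyps(2) right.IH unfolding \<Delta> by blast
qed

text \<open>Cut elimination.  The cut formula decreases in the lexicographic order of box depth and
size; the Box case needs Box-free causes, i.e. a causal theory.\<close>

fun box_depth :: "'a fm \<Rightarrow> nat" where
  "box_depth (Neg A) = box_depth A"
| "box_depth (Conj A B) = max (box_depth A) (box_depth B)"
| "box_depth (Disj A B) = max (box_depth A) (box_depth B)"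
| "box_depth (Impl A B) = max (box_depth A) (box_depth B)"
| "box_depth (Box p) = Suc (box_depth p)"
| "box_depth _ = 0"

lemma box_depth_boxfree: "boxfree A \<Longrightarrow> box_depth A = 0"
  by (induction A) auto

lemma boxfree_conjs: "\<forall>x \<in> set xs. boxfree x \<Longrightarrow> boxfree (conjs xs)"
  by (induction xs rule: conjs.induct) auto

lemma causal_theory_boxfree:
  "causal_theory Th \<Longrightarrow> (a, b) \<in> Th \<Longrightarrow> boxfree a \<and> boxfree b"
  unfolding causal_theory_def by blast

lemma boxfree_conjs_premises:
  "causal_theory Th \<Longrightarrow> set rs \<subseteq> Th \<Longrightarrow> boxfree (conjs (map fst rs))"
  by (rule boxfree_conjs) (auto dest: causal_theory_boxfree)

definition cut_order :: "('a fm \<times> 'a fm) set" where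
  "cut_order = inv_image (less_than <*lex*> less_than) (\<lambda>C. (box_depth C, size C))"

lemma wf_cut_order: "wf cut_order"
  unfolding cut_order_def by auto

lemma cut_order_subformula: "box_depth A \<le> box_depth C \<Longrightarrow> size A < size C \<Longrightarrow> (A, C) \<in> cut_order"
  unfolding cut_order_def by auto

lemma cut_order_depth: "box_depth A < box_depth C \<Longrightarrow> (A, C) \<in> cut_order"
  unfolding cut_order_def by auto

definition premises_derivable :: "'a causal_theory \<Rightarrow> ('a fm set \<Rightarrow> 'a fm set \<Rightarrow> bool)
      \<Rightarrow> ('a fm set \<times> 'a fm set) set \<Rightarrow> 'a fm set \<Rightarrow> 'a fm set \<Rightarrow> bool" where
  "premises_derivable Th Side P \<Gamma> \<Delta> \<longleftrightarrow> (\<forall>(X, Y) \<in> P. cf Th Side (X \<union> \<Gamma>) (Y \<union> \<Delta>))"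

lemma premises_derivable_weaken:
  assumes "premises_derivable Th Side P \<Gamma> \<Delta>" "\<Gamma> \<subseteq> \<Gamma>'" "\<Delta> \<subseteq> \<Delta>'"
  shows "premises_derivable Th Side P \<Gamma>' \<Delta>'"
  unfolding premises_derivable_def
proof clarify
  fix X Y assume "(X, Y) \<in> P"
  then have "cf Th Side (X \<union> \<Gamma>) (Y \<union> \<Delta>)" using assms(1) unfolding premises_derivable_def by blast
  then show "cf Th Side (X \<union> \<Gamma>') (Y \<union> \<Delta>')" by (rule cf_weaken) (use assms(2,3) in auto)
qed

text \<open>Cut is admissible for all cut formulas below C (the induction hypothesis on the cut formula).\<close>

definition cut_admissible_below :: "'a causal_theory \<Rightarrow> ('a fm set \<Rightarrow> 'a fm set \<Rightarrow> bool) \<Rightarrow> 'a fm \<Rightarrow> bool" where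
  "cut_admissible_below Th Side C \<longleftrightarrow> (\<forall>C' \<Gamma> \<Delta>. (C', C) \<in> cut_order \<longrightarrow>
     cf Th Side \<Gamma> (insert C' \<Delta>) \<longrightarrow> cf Th Side (insert C' \<Gamma>) \<Delta> \<longrightarrow> cf Th Side \<Gamma> \<Delta>)"

lemma cut_below:
  "cut_admissible_below Th Side C \<Longrightarrow> cf Th Side \<Gamma> (insert C' \<Delta>) \<Longrightarrow> cf Th Side (insert C' \<Gamma>) \<Delta>
   \<Longrightarrow> (C', C) \<in> cut_order \<Longrightarrow> cf Th Side \<Gamma> \<Delta>"
  unfolding cut_admissible_below_def by blast

text \<open>Principal cuts: the cut formula C was introduced on both sides.  For Box p the right rule
provides a conjunction of Box-free causes, which the left rule can consume.\<close>

lemma principal_cut_box: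
  assumes causal: "causal_theory Th" and below: "cut_admissible_below Th Side (Box p)"
    and R: "PR \<in> right_rule Th Side (Box p)" "premises_derivable Th Side PR \<Gamma> \<Delta>"
    and L: "PL \<in> left_rule Th Side (Box p)" "premises_derivable Th Side PL \<Gamma> \<Delta>"
  shows "cf Th Side \<Gamma> \<Delta>"
proof -
  from R obtain rs where rs: "set rs \<subseteq> Th" "Side (set (map snd rs)) {p}"
    and r: "cf Th Side \<Gamma> (insert (conjs (map fst rs)) \<Delta>)" by (auto simp: premises_derivable_def)
  have "(fst ` set rs, {}) \<in> PL" using L(1) rs by auto
  then have "cf Th Side (fst ` set rs \<union> \<Gamma>) \<Delta>" using L(2) by (auto simp: premises_derivable_def)
  then have l: "cf Th Side (insert (conjs (map fst rs)) \<Gamma>) \<Delta>" by (intro cf_conjs_left) simp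
  have "box_depth (conjs (map fst rs)) = 0"
    by (rule box_depth_boxfree[OF boxfree_conjs_premises[OF causal rs(1)]])
  then show ?thesis by (intro cut_below[OF below r l] cut_order_depth) simp
qed

lemma principal_cut:
  assumes causal: "causal_theory Th" and below: "cut_admissible_below Th Side C"
    and R: "PR \<in> right_rule Th Side C" "premises_derivable Th Side PR \<Gamma> \<Delta>"
    and L: "PL \<in> left_rule Th Side C" "premises_derivable Th Side PL \<Gamma> \<Delta>"
  shows "cf Th Side \<Gamma> \<Delta>"
proof (cases C)
  case (Neg A)
  from R L Neg have r: "cf Th Side (insert A \<Gamma>) \<Delta>" and l: "cf Th Side \<Gamma> (insert A \<Delta>)"
    by (auto simp: premises_derivable_def)
  show ?thesis by (rule cut_below[OF below l r]) (simp add: Neg cut_order_subformula)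
next
  case (Conj A B)
  from R L Conj have r: "cf Th Side \<Gamma> (insert A \<Delta>)" "cf Th Side \<Gamma> (insert B \<Delta>)"
    and l: "cf Th Side (insert A (insert B \<Gamma>)) \<Delta>" by (auto simp: premises_derivable_def)
  have "cf Th Side (insert B \<Gamma>) (insert A \<Delta>)" using r(1) by (rule cf_weaken) auto
  then have "cf Th Side (insert B \<Gamma>) \<Delta>"
    by (rule cut_below[OF below _ l]) (simp add: Conj cut_order_subformula)
  then show ?thesis by (rule cut_below[OF below r(2)]) (simp add: Conj cut_order_subformula)
next
  case (Disj A B)
  from R L Disj have r: "cf Th Side \<Gamma> (insert A (insert B \<Delta>))"
    and l: "cf Th Side (insert A \<Gamma>) \<Delta>" "cf Th Side (insert B \<Gamma>) \<Delta>" by (auto simp: premises_derivable_def)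
  have "cf Th Side (insert A \<Gamma>) (insert B \<Delta>)" using l(1) by (rule cf_weaken) auto
  then have "cf Th Side \<Gamma> (insert B \<Delta>)"
    by (rule cut_below[OF below r]) (simp add: Disj cut_order_subformula)
  then show ?thesis by (rule cut_below[OF below _ l(2)]) (simp add: Disj cut_order_subformula)
next
  case (Impl A B)
  from R L Impl have r: "cf Th Side (insert A \<Gamma>) (insert B \<Delta>)"
    and l: "cf Th Side \<Gamma> (insert A \<Delta>)" "cf Th Side (insert B \<Gamma>) \<Delta>" by (auto simp: premises_derivable_def)
  have "cf Th Side (insert B (insert A \<Gamma>)) \<Delta>" using l(2) by (rule cf_weaken) auto
  then have "cf Th Side (insert A \<Gamma>) \<Delta>"
    by (rule cut_below[OF below r]) (simp add: Impl cut_order_subformula)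
  then show ?thesis by (rule cut_below[OF below l(1)]) (simp add: Impl cut_order_subformula)
next
  case (Box p)
  then show ?thesis using principal_cut_box[OF causal, of Side p PR \<Gamma> \<Delta> PL] below R L by simp
qed (use R L in auto)

text \<open>Cut with C introduced on the right (premises PR available): by induction on the
derivation containing C in the antecedent; where C is principal, a principal cut applies.\<close>

lemma cut_with_right_premises:
  assumes causal: "causal_theory Th"
    and below: "cut_admissible_below Th Side C"
  shows "cf Th Side \<Gamma>' \<Delta>' \<Longrightarrow> \<Gamma>' \<subseteq> insert C \<Gamma> \<Longrightarrow> \<Delta>' \<subseteq> \<Delta> \<Longrightarrow> PR \<in> right_rule Th Side C
         \<Longrightarrow> premises_derivable Th Side PR \<Gamma> \<Delta> \<Longrightarrow> cf Th Side \<Gamma> \<Delta>"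
proof (induction arbitrary: \<Gamma> \<Delta> rule: cf.induct)
  case (axiom A \<Gamma>' \<Delta>')
  show ?case
  proof (cases "A \<in> \<Gamma>")
    case True
    then show ?thesis using axiom by (intro cf.axiom[of A]) auto
  next
    case False
    then have "C \<in> \<Delta>" using axiom by auto
    then show ?thesis
      by (rule cf.right[OF _ axiom.prems(3)]) (use axiom.prems(4) in \<open>auto simp: premises_derivable_def\<close>)
  qed
next
  case (left A \<Gamma>' P \<Delta>')
  have derivable_premises: "cf Th Side (X \<union> \<Gamma>) (Y \<union> \<Delta>)" if "(X, Y) \<in> P" for X Y
  proof (rule left.IH[OF that _ _ left.prems(3)])
    show "premises_derivable Th Side PR (X \<union> \<Gamma>) (Y \<union> \<Delta>)"
      by (rule premises_derivable_weaken[OF left.prems(4)]) auto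
  qed (use left.prems in auto)
  show ?case
  proof (cases "A \<in> \<Gamma>")
    case True
    then show ?thesis by (rule cf.left[OF _ left.hyps(2) derivable_premises])
  next
    case False
    then have "P \<in> left_rule Th Side C" using left.hyps left.prems(1) by auto
    moreover have "premises_derivable Th Side P \<Gamma> \<Delta>"
      using derivable_premises unfolding premises_derivable_def by blast
    ultimately show ?thesis using principal_cut[OF causal below left.prems(3,4)] by blast
  qed
next
  case (right A \<Delta>' P \<Gamma>')
  have derivable_premises: "cf Th Side (X \<union> \<Gamma>) (Y \<union> \<Delta>)" if "(X, Y) \<in> P" for X Y
  proof (rule right.IH[OF that _ _ right.prems(3)])
    show "premises_derivable Th Side PR (X \<union> \<Gamma>) (Y \<union> \<Delta>)"
      by (rule premises_derivable_weaken[OF right.prems(4)]) auto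
  qed (use right.prems in auto)
  show ?case using right.hyps(1) right.prems(2) by (intro cf.right[OF _ right.hyps(2) derivable_premises]) auto
qed

text \<open>Cut in general: by induction on the derivation with C in the succedent; where C is
principal there, the previous lemma applies.\<close>

lemma cut_with_left_derivation:
  assumes causal: "causal_theory Th"
    and below: "cut_admissible_below Th Side C"
  shows "cf Th Side \<Gamma>' \<Delta>' \<Longrightarrow> \<Gamma>' \<subseteq> \<Gamma> \<Longrightarrow> \<Delta>' \<subseteq> insert C \<Delta> \<Longrightarrow> cf Th Side (insert C \<Gamma>) \<Delta>
         \<Longrightarrow> cf Th Side \<Gamma> \<Delta>"
proof (induction arbitrary: \<Gamma> \<Delta> rule: cf.induct)
  case (axiom A \<Gamma>' \<Delta>')
  show ?case
  proof (cases "A \<in> \<Delta>")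
    case True
    then show ?thesis using axiom by (intro cf.axiom[of A]) auto
  next
    case False
    then have "insert C \<Gamma> = \<Gamma>" using axiom by auto
    then show ?thesis using axiom.prems(3) by simp
  qed
next
  case (left A \<Gamma>' P \<Delta>')
  have derivable_premises: "cf Th Side (X \<union> \<Gamma>) (Y \<union> \<Delta>)" if "(X, Y) \<in> P" for X Y
  proof (rule left.IH[OF that])
    show "cf Th Side (insert C (X \<union> \<Gamma>)) (Y \<union> \<Delta>)" by (rule cf_weaken[OF left.prems(3)]) auto
  qed (use left.prems in auto)
  show ?case using left.hyps(1) left.prems(1) by (intro cf.left[OF _ left.hyps(2) derivable_premises]) auto
next
  case (right A \<Delta>' P \<Gamma>')
  have derivable_premises: "cf Th Side (X \<union> \<Gamma>) (Y \<union> \<Delta>)" if "(X, Y) \<in> P" for X Y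
  proof (rule right.IH[OF that])
    show "cf Th Side (insert C (X \<union> \<Gamma>)) (Y \<union> \<Delta>)" by (rule cf_weaken[OF right.prems(3)]) auto
  qed (use right.prems in auto)
  show ?case
  proof (cases "A \<in> \<Delta>")
    case True
    then show ?thesis by (rule cf.right[OF _ right.hyps(2) derivable_premises])
  next
    case False
    then have "P \<in> right_rule Th Side C" using right.hyps right.prems(2) by auto
    moreover have "premises_derivable Th Side P \<Gamma> \<Delta>"
      using derivable_premises unfolding premises_derivable_def by blast
    ultimately show ?thesis
      using cut_with_right_premises[OF causal below right.prems(3) subset_refl subset_refl] by blast
  qed
qed

theorem cut_admissible:
  assumes "causal_theory Th"
  shows "cf Th Side \<Gamma> (insert C \<Delta>) \<Longrightarrow> cf Th Side (insert C \<Gamma>) \<Delta> \<Longrightarrow> cf Th Side \<Gamma> \<Delta>"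
proof (induction C arbitrary: \<Gamma> \<Delta> rule: wf_induct_rule[OF wf_cut_order])
  case (1 C)
  show ?case
  proof (rule cut_with_left_derivation[OF assms _ "1.prems"(1) subset_refl subset_refl "1.prems"(2)])
    show "cut_admissible_below Th Side C" using "1.IH" unfolding cut_admissible_below_def by blast
  qed
qed

lemma cf_conjs_subset:
  assumes "causal_theory Th" "cf Th Side \<Gamma> (insert (conjs xs) \<Delta>)" "set ys \<subseteq> set xs"
  shows "cf Th Side \<Gamma> (insert (conjs ys) \<Delta>)"
proof -
  have "cf Th Side \<Gamma> (insert (conjs xs) (insert (conjs ys) \<Delta>))" by (rule cf_weaken[OF assms(2)]) auto
  moreover have "cf Th Side (set xs \<union> \<Gamma>) (insert (conjs ys) \<Delta>)"
    by (rule cf_conjs_right) (use assms(3) in auto)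
  then have "cf Th Side (insert (conjs xs) \<Gamma>) (insert (conjs ys) \<Delta>)" by (rule cf_conjs_left)
  ultimately show ?thesis by (rule cut_admissible[OF assms(1)])
qed

theorem calc_complete:
  assumes causal: "causal_theory Th"
  shows "calc Th Side \<Gamma> \<Delta> \<Longrightarrow> cf Th Side \<Gamma> \<Delta>"
proof (induction rule: calc.induct)
  case (ax p)
  show ?case by (rule cf.axiom[of p]) auto
next
  case botL
  show ?case by (rule cf.left[of Bot _ "{}"]) auto
next
  case topR
  show ?case by (rule cf.right[of Top _ "{}"]) auto
next
  case (weak \<Gamma> \<Delta> \<Gamma>' \<Delta>')
  then show ?case by (blast intro: cf_weaken)
next
  case (negL \<Gamma> A \<Delta>)
  show ?case by (rule cf.left[of "Neg A" _ "{({}, {A})}"]) (auto intro: cf_weaken[OF negL.IH])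
next
  case (negR A \<Gamma> \<Delta>)
  show ?case by (rule cf.right[of "Neg A" _ "{({A}, {})}"]) (auto intro: cf_weaken[OF negR.IH])
next
  case (conjL A B \<Gamma> \<Delta>)
  show ?case by (rule cf.left[of "Conj A B" _ "{({A, B}, {})}"]) (auto intro: cf_weaken[OF conjL.IH])
next
  case (conjR \<Gamma> A \<Delta> B)
  show ?case
    by (rule cf.right[of "Conj A B" _ "{({}, {A}), ({}, {B})}"])
      (auto intro: cf_weaken[OF conjR.IH(1)] cf_weaken[OF conjR.IH(2)])
next
  case (disjL A \<Gamma> \<Delta> B)
  show ?case
    by (rule cf.left[of "Disj A B" _ "{({A}, {}), ({B}, {})}"])
      (auto intro: cf_weaken[OF disjL.IH(1)] cf_weaken[OF disjL.IH(2)])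
next
  case (disjR \<Gamma> A B \<Delta>)
  show ?case by (rule cf.right[of "Disj A B" _ "{({}, {A, B})}"]) (auto intro: cf_weaken[OF disjR.IH])
next
  case (implL \<Gamma> A \<Delta> B)
  show ?case
    by (rule cf.left[of "Impl A B" _ "{({}, {A}), ({B}, {})}"])
      (auto intro: cf_weaken[OF implL.IH(1)] cf_weaken[OF implL.IH(2)])
next
  case (implR A \<Gamma> B \<Delta>)
  show ?case by (rule cf.right[of "Impl A B" _ "{({A}, {B})}"]) (auto intro: cf_weaken[OF implR.IH])
next
  case (boxR rs p \<Gamma> \<Delta>)
  show ?case
    by (rule cf.right[of "Box p" _ "{({}, {conjs (map fst rs)})}"])
      (use boxR.hyps in \<open>auto intro: cf_weaken[OF boxR.IH]\<close>)
next
  case (boxL p \<Gamma> \<Delta>)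
  show ?case
  proof (rule cf.left[of "Box p" _ "{(fst ` S, {}) | S. finite S \<and> S \<subseteq> Th \<and> Side (snd ` S) {p}}"])
    fix X Y :: "'a fm set" assume "(X, Y) \<in> {(fst ` S, {}) | S. finite S \<and> S \<subseteq> Th \<and> Side (snd ` S) {p}}"
    then obtain S where "X = fst ` S" "Y = {}" "finite S" "S \<subseteq> Th" "Side (snd ` S) {p}" by blast
    then show "cf Th Side (X \<union> insert (Box p) \<Gamma>) (Y \<union> \<Delta>)" by (auto intro: cf_weaken[OF boxL.IH])
  qed auto
next
  case (cut \<Gamma> p \<Delta> \<Gamma>' \<Delta>')
  have "cf Th Side (\<Gamma> \<union> \<Gamma>') (insert p (\<Delta> \<union> \<Delta>'))" by (rule cf_weaken[OF cut.IH(1)]) auto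
  moreover have "cf Th Side (insert p (\<Gamma> \<union> \<Gamma>')) (\<Delta> \<union> \<Delta>')" by (rule cf_weaken[OF cut.IH(2)]) auto
  ultimately show ?case by (rule cut_admissible[OF causal])
qed

corollary derivability_cut_free:
  assumes "causal_theory Th" and "is_derivability Th D"
  shows "D \<Gamma> \<Delta> \<longleftrightarrow> cf Th D \<Gamma> \<Delta>"
proof -
  have "D \<Gamma> \<Delta> \<longleftrightarrow> calc Th D \<Gamma> \<Delta>" using assms(2) unfolding is_derivability_def by metis
  then show ?thesis using calc_complete[OF assms(1)] cf_sound by blast
qed

lemma derivable_impl_iff:
  assumes "is_derivability Th D"
  shows "D B {Impl a b} \<longleftrightarrow> D (insert a B) {b}"
proof -
  have calc_D: "D = calc Th D" using assms unfolding is_derivability_def .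
  have "calc Th D (insert a B) {b}" if "calc Th D B {Impl a b}"
  proof -
    have "calc Th D {a} (insert a {b})" "calc Th D (insert b {a}) {b}"
      by (rule calc.weak[OF calc.ax]; auto)+
    then have "calc Th D (insert (Impl a b) {a}) {b}" by (rule calc.implL)
    then have "calc Th D (B \<union> {a}) ({} \<union> {b})" by (intro calc.cut[of _ _ B _ "{}"]) (use that in simp)
    then show ?thesis by simp
  qed
  moreover have "calc Th D B {Impl a b}" if "calc Th D (insert a B) {b}"
    using calc.implR[of Th D a B b "{}"] that by simp
  ultimately show ?thesis by (metis calc_D)
qed

text \<open>A rule a |> b of the theory makes a \<and> Box (b \<longrightarrow> q) |- Box q derivable; this is how
the translation of Box' q is undone in the backward direction.\<close>

lemma box_right_by_rule:
  assumes causal: "causal_theory Th" and D: "is_derivability Th D" and rule: "(a, b) \<in> Th"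
    and "cf Th D \<Gamma> (insert a \<Delta>)" and "cf Th D \<Gamma> (insert (Box (Impl b q)) \<Delta>)"
  shows "cf Th D \<Gamma> (insert (Box q) \<Delta>)"
proof -
  have "cf Th D (insert a \<Gamma>) (insert (Box (Impl b q)) (insert (Box q) \<Delta>))"
    by (rule cf_weaken[OF assms(5)]) auto
  moreover have "cf Th D (insert (Box (Impl b q)) (insert a \<Gamma>)) (insert (Box q) \<Delta>)"
  proof (rule cf_box_left[of "Impl b q"], simp)
    fix S assume S: "finite S" "S \<subseteq> Th" "D (snd ` S) {Impl b q}"
    then have "D (snd ` insert (a, b) S) {q}" using derivable_impl_iff[OF D] by simp
    then show "cf Th D (fst ` S \<union> insert (Box (Impl b q)) (insert a \<Gamma>)) (insert (Box q) \<Delta>)"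
      by (rule cf_box_right_by_context[rotated 2]) (use S rule in auto)
  qed
  ultimately have "cf Th D (insert a \<Gamma>) (insert (Box q) \<Delta>)" by (rule cut_admissible[OF causal])
  moreover have "cf Th D \<Gamma> (insert a (insert (Box q) \<Delta>))" by (rule cf_weaken[OF assms(4)]) auto
  ultimately show ?thesis by (rule cut_admissible[OF causal, rotated])
qed

lemma alpha_boxfree: "boxfree x \<Longrightarrow> alpha \<phi> \<psi> x = x"
  by (induction x) auto

lemma alpha_boxfree_set: "\<forall>x \<in> B. boxfree x \<Longrightarrow> alpha \<phi> \<psi> ` B = B"
  by (simp add: alpha_boxfree)

lemma alpha_not_Box [simp]: "alpha \<phi> \<psi> x \<noteq> Box y" "Box y \<noteq> alpha \<phi> \<psi> x"
  by (cases x; simp)+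

lemma alpha_not_Conj_Box [simp]: "alpha \<phi> \<psi> x \<noteq> Conj a (Box b)"
  by (cases x) simp_all

lemma alpha_inj: "alpha \<phi> \<psi> x = alpha \<phi> \<psi> y \<Longrightarrow> x = y"
  by (induction x arbitrary: y) (auto elim: alpha.elims[OF sym])

definition map_premises :: "('a fm \<Rightarrow> 'a fm) \<Rightarrow> ('a fm set \<times> 'a fm set) set \<Rightarrow> ('a fm set \<times> 'a fm set) set" where
  "map_premises f P = (\<lambda>(X, Y). (f ` X, f ` Y)) ` P"

lemma left_rule_alpha:
  assumes "\<forall>p. A \<noteq> Box p"
  shows "left_rule Th Side (alpha \<phi> \<psi> A) = map_premises (alpha \<phi> \<psi>) ` left_rule Th' Side' A"
  using assms by (cases A) (auto simp: map_premises_def)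

lemma right_rule_alpha:
  assumes "\<forall>p. A \<noteq> Box p"
  shows "right_rule Th Side (alpha \<phi> \<psi> A) = map_premises (alpha \<phi> \<psi>) ` right_rule Th' Side' A"
  using assms by (cases A) (auto simp: map_premises_def)

text \<open>The bodies of the outermost Box occurrences of a formula; the rules never create new ones
(causes are Box-free), and they have smaller box depth.\<close>

fun outer_boxes :: "'a fm \<Rightarrow> 'a fm set" where
  "outer_boxes (Box q) = {q}"
| "outer_boxes (Neg A) = outer_boxes A"
| "outer_boxes (Conj A B) = outer_boxes A \<union> outer_boxes B"
| "outer_boxes (Disj A B) = outer_boxes A \<union> outer_boxes B"
| "outer_boxes (Impl A B) = outer_boxes A \<union> outer_boxes B"
| "outer_boxes _ = {}"

lemma outer_boxes_boxfree: "boxfree x \<Longrightarrow> outer_boxes x = {}"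
  by (induction x) auto

lemma outer_boxes_depth: "q \<in> outer_boxes x \<Longrightarrow> box_depth q < box_depth x"
  by (induction x) auto

lemma left_rule_outer_boxes:
  assumes "causal_theory Th" "P \<in> left_rule Th Side A" "(X, Y) \<in> P"
  shows "\<Union> (outer_boxes ` (X \<union> Y)) \<subseteq> outer_boxes A"
  using assms by (cases A) (auto simp: outer_boxes_boxfree dest: causal_theory_boxfree)

lemma right_rule_outer_boxes:
  assumes "causal_theory Th" "P \<in> right_rule Th Side A" "(X, Y) \<in> P"
  shows "\<Union> (outer_boxes ` (X \<union> Y)) \<subseteq> outer_boxes A"
  using assms by (cases A) (auto simp: outer_boxes_boxfree boxfree_conjs_premises)

locale rule_extension =
  fixes \<Theta> :: "'a causal_theory" and \<phi> \<psi> :: "'a fm"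
    and D D' :: "'a fm set \<Rightarrow> 'a fm set \<Rightarrow> bool"
  assumes causal: "causal_theory \<Theta>" and boxfree_\<phi>: "boxfree \<phi>" and boxfree_\<psi>: "boxfree \<psi>"
    and derivability: "is_derivability \<Theta> D"
    and derivability': "is_derivability (insert (\<phi>, \<psi>) \<Theta>) D'"
begin

abbreviation \<Theta>' :: "'a causal_theory" where "\<Theta>' \<equiv> insert (\<phi>, \<psi>) \<Theta>"

abbreviation \<alpha> :: "'a fm \<Rightarrow> 'a fm" where "\<alpha> \<equiv> alpha \<phi> \<psi>"

lemma causal': "causal_theory \<Theta>'"
  using causal boxfree_\<phi> boxfree_\<psi> unfolding causal_theory_def by auto

lemma boxfree_rule_parts:
  assumes "S \<subseteq> \<Theta>'"
  shows "\<forall>x \<in> fst ` S. boxfree x" and "\<forall>x \<in> snd ` S. boxfree x"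
  using assms causal_theory_boxfree[OF causal'] by fastforce+

definition agrees :: "'a fm \<Rightarrow> bool" where
  "agrees q \<longleftrightarrow> (\<forall>B. (\<forall>b \<in> B. boxfree b) \<longrightarrow> (D' B {q} \<longleftrightarrow> D B {\<alpha> q}))"

lemma agrees_impl:
  assumes "agrees q"
  shows "agrees (Impl \<psi> q)"
  unfolding agrees_def
proof (intro allI impI)
  fix B :: "'a fm set" assume B: "\<forall>b \<in> B. boxfree b"
  have "D' B {Impl \<psi> q} \<longleftrightarrow> D' (insert \<psi> B) {q}" by (rule derivable_impl_iff[OF derivability'])
  also have "\<dots> \<longleftrightarrow> D (insert \<psi> B) {\<alpha> q}" using assms B boxfree_\<psi> unfolding agrees_def by simp
  also have "\<dots> \<longleftrightarrow> D B {\<alpha> (Impl \<psi> q)}"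
    using derivable_impl_iff[OF derivability] alpha_boxfree[OF boxfree_\<psi>] by simp
  finally show "D' B {Impl \<psi> q} \<longleftrightarrow> D B {\<alpha> (Impl \<psi> q)}" .
qed

lemma agrees_rules:
  "agrees q \<Longrightarrow> S \<subseteq> \<Theta>' \<Longrightarrow> D' (snd ` S) {q} \<longleftrightarrow> D (snd ` S) {\<alpha> q}"
  using boxfree_rule_parts(2) unfolding agrees_def by blast

text \<open>Forward translation.  Box' p on the left: the disjunct Box (alpha p) is handled by the
rule sets of Theta, the disjunct phi \<and> Box (psi \<longrightarrow> alpha p) by adding phi |> psi.\<close>

lemma forward_box_left:
  assumes "agrees p" "\<alpha> (Box p) \<in> \<Gamma>"
    and branch: "\<And>S. finite S \<Longrightarrow> S \<subseteq> \<Theta>' \<Longrightarrow> D' (snd ` S) {p} \<Longrightarrow> cf \<Theta> D (fst ` S \<union> \<Gamma>) \<Delta>"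
  shows "cf \<Theta> D \<Gamma> \<Delta>"
proof (rule cf_disj_left[OF assms(2)[simplified]])
  let ?B = "Box (Impl \<psi> (\<alpha> p))"
  show "cf \<Theta> D (insert (Conj \<phi> ?B) \<Gamma>) \<Delta>"
  proof (rule cf_conj_left[of \<phi> ?B])
    show "cf \<Theta> D (insert \<phi> (insert ?B (insert (Conj \<phi> ?B) \<Gamma>))) \<Delta>"
    proof (rule cf_box_left[of "Impl \<psi> (\<alpha> p)"])
      fix S assume S: "finite S" "S \<subseteq> \<Theta>" "D (snd ` S) {Impl \<psi> (\<alpha> p)}"
      then have "D' (snd ` S) {Impl \<psi> p}"
        using agrees_rules[OF agrees_impl[OF assms(1)], of S] alpha_boxfree[OF boxfree_\<psi>] by auto
      then have "D' (snd ` insert (\<phi>, \<psi>) S) {p}" using derivable_impl_iff[OF derivability'] by simp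
      then have "cf \<Theta> D (fst ` insert (\<phi>, \<psi>) S \<union> \<Gamma>) \<Delta>" by (rule branch[rotated 2]) (use S in auto)
      then show "cf \<Theta> D (fst ` S \<union> insert \<phi> (insert ?B (insert (Conj \<phi> ?B) \<Gamma>))) \<Delta>"
        by (rule cf_weaken) auto
    qed simp
  qed simp
  show "cf \<Theta> D (insert (Box (\<alpha> p)) \<Gamma>) \<Delta>"
  proof (rule cf_box_left[of "\<alpha> p"])
    fix S assume S: "finite S" "S \<subseteq> \<Theta>" "D (snd ` S) {\<alpha> p}"
    then have "D' (snd ` S) {p}" using agrees_rules[OF assms(1), of S] by auto
    then have "cf \<Theta> D (fst ` S \<union> \<Gamma>) \<Delta>" by (rule branch[rotated 2]) (use S in auto)
    then show "cf \<Theta> D (fst ` S \<union> insert (Box (\<alpha> p)) \<Gamma>) \<Delta>" by (rule cf_weaken) auto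
  qed simp
qed

text \<open>Box' p on the right: a rule set using phi |> psi yields the first disjunct, any other
rule set the second one.\<close>

lemma forward_box_right:
  assumes "agrees p" "\<alpha> (Box p) \<in> \<Delta>" "set rs \<subseteq> \<Theta>'" "D' (set (map snd rs)) {p}"
    and premise: "cf \<Theta> D \<Gamma> (insert (conjs (map fst rs)) \<Delta>)"
  shows "cf \<Theta> D \<Gamma> \<Delta>"
proof (rule cf_disj_right[OF assms(2)[simplified]])
  let ?B = "Box (Impl \<psi> (\<alpha> p))" and ?\<Delta>' = "insert (Conj \<phi> (Box (Impl \<psi> (\<alpha> p)))) (insert (Box (\<alpha> p)) \<Delta>)"
  show "cf \<Theta> D \<Gamma> ?\<Delta>'"
  proof (cases "(\<phi>, \<psi>) \<in> set rs")
    case True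
    define rs0 where "rs0 = filter (\<lambda>r. r \<noteq> (\<phi>, \<psi>)) rs"
    have rs0: "set rs0 \<subseteq> \<Theta>" using assms(3) unfolding rs0_def by auto
    have "set (map snd rs) = insert \<psi> (snd ` set rs0)" using True unfolding rs0_def by force
    then have "D' (snd ` set rs0) {Impl \<psi> p}"
      using assms(4) derivable_impl_iff[OF derivability'] by simp
    then have side: "D (set (map snd rs0)) {Impl \<psi> (\<alpha> p)}"
      using agrees_rules[OF agrees_impl[OF assms(1)], of "set rs0"] rs0 alpha_boxfree[OF boxfree_\<psi>] by auto
    have "cf \<Theta> D \<Gamma> (insert (conjs (map fst rs0)) \<Delta>)"
      by (rule cf_conjs_subset[OF causal premise]) (auto simp: rs0_def)
    then have "cf \<Theta> D \<Gamma> (insert (conjs (map fst rs0)) (insert ?B ?\<Delta>'))" by (rule cf_weaken) auto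
    then have box: "cf \<Theta> D \<Gamma> (insert ?B ?\<Delta>')" by (rule cf_box_right[where Side = D, OF _ rs0 side, rotated]) simp
    have "cf \<Theta> D \<Gamma> (insert (conjs [\<phi>]) \<Delta>)"
      by (rule cf_conjs_subset[OF causal premise]) (use True in force)
    then have phi: "cf \<Theta> D \<Gamma> (insert \<phi> ?\<Delta>')" by (rule cf_weaken) auto
    show ?thesis by (rule cf_conj_right[OF _ phi box]) simp
  next
    case False
    then have rs: "set rs \<subseteq> \<Theta>" using assms(3) by auto
    then have side: "D (set (map snd rs)) {\<alpha> p}" using agrees_rules[OF assms(1), of "set rs"] assms(4) by auto
    have "cf \<Theta> D \<Gamma> (insert (conjs (map fst rs)) ?\<Delta>')" by (rule cf_weaken[OF premise]) auto
    then show ?thesis by (rule cf_box_right[where Side = D, OF _ rs side, rotated]) simp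
  qed
qed

lemma forward_left_step:
  assumes A: "A \<in> \<Gamma>" "\<forall>q \<in> outer_boxes A. agrees q" and P: "P \<in> left_rule \<Theta>' D' A"
    and translated: "\<And>X Y. (X, Y) \<in> P \<Longrightarrow> cf \<Theta> D (\<alpha> ` X \<union> \<alpha> ` \<Gamma>) (\<alpha> ` Y \<union> \<alpha> ` \<Delta>)"
  shows "cf \<Theta> D (\<alpha> ` \<Gamma>) (\<alpha> ` \<Delta>)"
proof (cases "\<exists>p. A = Box p")
  case True
  then obtain p where p: "A = Box p" by blast
  show ?thesis
  proof (rule forward_box_left)
    show "agrees p" using A(2) p by simp
    show "\<alpha> (Box p) \<in> \<alpha> ` \<Gamma>" using A(1) p by (intro imageI) simp
    fix S assume "finite S" "S \<subseteq> \<Theta>'" "D' (snd ` S) {p}"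
    then show "cf \<Theta> D (fst ` S \<union> \<alpha> ` \<Gamma>) (\<alpha> ` \<Delta>)"
      using translated[of "fst ` S" "{}"] P p alpha_boxfree_set[OF boxfree_rule_parts(1)] by auto
  qed
next
  case False
  then have mapped: "map_premises \<alpha> P \<in> left_rule \<Theta> D (\<alpha> A)" using P left_rule_alpha by blast
  show ?thesis by (rule cf.left[OF _ mapped]) (use A(1) translated in \<open>auto simp: map_premises_def\<close>)
qed

lemma forward_right_step:
  assumes A: "A \<in> \<Delta>" "\<forall>q \<in> outer_boxes A. agrees q" and P: "P \<in> right_rule \<Theta>' D' A"
    and translated: "\<And>X Y. (X, Y) \<in> P \<Longrightarrow> cf \<Theta> D (\<alpha> ` X \<union> \<alpha> ` \<Gamma>) (\<alpha> ` Y \<union> \<alpha> ` \<Delta>)"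
  shows "cf \<Theta> D (\<alpha> ` \<Gamma>) (\<alpha> ` \<Delta>)"
proof (cases "\<exists>p. A = Box p")
  case True
  then obtain p where p: "A = Box p" by blast
  then obtain rs where rs: "set rs \<subseteq> \<Theta>'" "D' (set (map snd rs)) {p}"
    and "P = {({}, {conjs (map fst rs)})}" using P by auto
  moreover have "\<alpha> (conjs (map fst rs)) = conjs (map fst rs)"
    by (rule alpha_boxfree[OF boxfree_conjs_premises[OF causal' rs(1)]])
  ultimately have "cf \<Theta> D (\<alpha> ` \<Gamma>) (insert (conjs (map fst rs)) (\<alpha> ` \<Delta>))" using translated by auto
  moreover have "agrees p" using A(2) p by simp
  moreover have "\<alpha> (Box p) \<in> \<alpha> ` \<Delta>" using A(1) p by (intro imageI) simp
  ultimately show ?thesis using forward_box_right[OF _ _ rs] by blast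
next
  case False
  then have mapped: "map_premises \<alpha> P \<in> right_rule \<Theta> D (\<alpha> A)" using P right_rule_alpha by blast
  show ?thesis by (rule cf.right[OF _ mapped]) (use A(1) translated in \<open>auto simp: map_premises_def\<close>)
qed

theorem translate_forward:
  "cf \<Theta>' D' \<Gamma> \<Delta> \<Longrightarrow> \<forall>x \<in> \<Gamma> \<union> \<Delta>. \<forall>q \<in> outer_boxes x. agrees q \<Longrightarrow> cf \<Theta> D (\<alpha> ` \<Gamma>) (\<alpha> ` \<Delta>)"
proof (induction rule: cf.induct)
  case (axiom A \<Gamma> \<Delta>)
  then show ?case by (intro cf.axiom[of "\<alpha> A"]) auto
next
  case (left A \<Gamma> P \<Delta>)
  show ?case
  proof (rule forward_left_step[OF left.hyps(1) _ left.hyps(2)])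
    show "\<forall>q \<in> outer_boxes A. agrees q" using left.prems left.hyps(1) by blast
    fix X Y assume XY: "(X, Y) \<in> P"
    have "\<forall>x \<in> (X \<union> \<Gamma>) \<union> (Y \<union> \<Delta>). \<forall>q \<in> outer_boxes x. agrees q"
      using left.prems left.hyps(1) left_rule_outer_boxes[OF causal' left.hyps(2) XY] by blast
    then show "cf \<Theta> D (\<alpha> ` X \<union> \<alpha> ` \<Gamma>) (\<alpha> ` Y \<union> \<alpha> ` \<Delta>)" using left.IH[OF XY] by (simp add: image_Un)
  qed
next
  case (right A \<Delta> P \<Gamma>)
  show ?case
  proof (rule forward_right_step[OF right.hyps(1) _ right.hyps(2)])
    show "\<forall>q \<in> outer_boxes A. agrees q" using right.prems right.hyps(1) by blast
    fix X Y assume XY: "(X, Y) \<in> P"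
    have "\<forall>x \<in> (X \<union> \<Gamma>) \<union> (Y \<union> \<Delta>). \<forall>q \<in> outer_boxes x. agrees q"
      using right.prems right.hyps(1) right_rule_outer_boxes[OF causal' right.hyps(2) XY] by blast
    then show "cf \<Theta> D (\<alpha> ` X \<union> \<alpha> ` \<Gamma>) (\<alpha> ` Y \<union> \<alpha> ` \<Delta>)" using right.IH[OF XY] by (simp add: image_Un)
  qed
qed

text \<open>Along a Theta-derivation of translated sequents, a left disjunct of
alpha (Box' q) stays "witnessed": the causes of a rule set discharging its Box lie in G,
the formulas produced when Box' q was decomposed in the Theta'-derivation.\<close>

definition witnessed_box :: "'a fm set \<Rightarrow> 'a fm \<Rightarrow> bool" where
  "witnessed_box G x \<longleftrightarrow> (\<exists>p S. x = Box p \<and> finite S \<and> S \<subseteq> \<Theta> \<and> D (snd ` S) {p} \<and> fst ` S \<subseteq> G)"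

definition witnessed :: "'a fm set \<Rightarrow> 'a fm \<Rightarrow> bool" where
  "witnessed G x \<longleftrightarrow> witnessed_box G x \<or> (\<exists>b. x = Conj \<phi> b \<and> \<phi> \<in> G \<and> witnessed_box G b)"

definition disjuncts :: "'a fm \<Rightarrow> 'a fm set" where
  "disjuncts q = {Conj \<phi> (Box (Impl \<psi> (\<alpha> q))), Box (\<alpha> q)}"

text \<open>The Theta-sequent Gamma0 |- Delta0 represents the Theta'-sequent Gamma \<union> G |- Delta \<union> Box R:
its formulas are translations, witnessed left disjuncts, or right disjuncts of alpha (Box q)
for q in R.\<close>

definition represents :: "'a fm set \<Rightarrow> 'a fm set \<Rightarrow> 'a fm set \<Rightarrow> 'a fm set \<Rightarrow> 'a fm set \<Rightarrow> 'a fm set \<Rightarrow> bool" where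
  "represents \<Gamma> \<Delta> R G \<Gamma>0 \<Delta>0 \<longleftrightarrow>
     (\<forall>x \<in> \<Gamma> \<union> \<Delta>. \<forall>q \<in> outer_boxes x. agrees q) \<and> (\<forall>q \<in> R. agrees q) \<and>
     \<Gamma>0 \<subseteq> \<alpha> ` \<Gamma> \<union> Collect (witnessed G) \<and> \<Delta>0 \<subseteq> \<alpha> ` \<Delta> \<union> \<Union> (disjuncts ` R)"

definition back_translatable :: "'a fm set \<Rightarrow> 'a fm set \<Rightarrow> bool" where
  "back_translatable \<Gamma>0 \<Delta>0 \<longleftrightarrow>
     (\<forall>\<Gamma> \<Delta> R G. represents \<Gamma> \<Delta> R G \<Gamma>0 \<Delta>0 \<longrightarrow> cf \<Theta>' D' (\<Gamma> \<union> G) (\<Delta> \<union> Box ` R))"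

lemma witnessed_boxI:
  "finite S \<Longrightarrow> S \<subseteq> \<Theta> \<Longrightarrow> D (snd ` S) {p} \<Longrightarrow> fst ` S \<subseteq> G \<Longrightarrow> witnessed_box G (Box p)"
  unfolding witnessed_box_def by blast

lemma witnessed_box_is_box: "witnessed_box G x \<Longrightarrow> \<exists>p. x = Box p"
  unfolding witnessed_box_def by blast

lemma witnessed_box_mono:
  assumes "witnessed_box G x" "G \<subseteq> G'"
  shows "witnessed_box G' x"
proof -
  obtain p S where "x = Box p" "finite S" "S \<subseteq> \<Theta>" "D (snd ` S) {p}" "fst ` S \<subseteq> G"
    using assms(1) unfolding witnessed_box_def by blast
  then show ?thesis using assms(2) unfolding witnessed_box_def by (intro exI[of _ p] exI[of _ S]) auto
qed

lemma witnessed_mono: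
  assumes "witnessed G x" "G \<subseteq> G'"
  shows "witnessed G' x"
  using assms witnessed_box_mono unfolding witnessed_def by blast

lemma not_witnessed_alpha: "\<not> witnessed G (\<alpha> x)"
  unfolding witnessed_def by (cases x) (auto dest!: witnessed_box_is_box)

lemma represents_agrees:
  assumes "represents \<Gamma> \<Delta> R G \<Gamma>0 \<Delta>0" "Box q \<in> \<Gamma> \<union> \<Delta>"
  shows "agrees q"
proof -
  have "\<forall>q' \<in> outer_boxes (Box q). agrees q'" using assms unfolding represents_def by blast
  then show ?thesis by simp
qed

lemma witnessed_disjunct:
  assumes "agrees q" "x \<in> disjuncts q" "witnessed G x"
  shows "cf \<Theta>' D' G {Box q}"
proof -
  consider "x = Box (\<alpha> q)" | "x = Conj \<phi> (Box (Impl \<psi> (\<alpha> q)))" using assms(2) unfolding disjuncts_def by blast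
  then show ?thesis
  proof cases
    case 1
    then obtain S where S: "finite S" "S \<subseteq> \<Theta>" "D (snd ` S) {\<alpha> q}" "fst ` S \<subseteq> G"
      using assms(3) unfolding witnessed_def witnessed_box_def by auto
    then have "D' (snd ` S) {q}" using agrees_rules[OF assms(1), of S] by auto
    then show ?thesis by (rule cf_box_right_by_context[rotated 2]) (use S in auto)
  next
    case 2
    then obtain S where S: "\<phi> \<in> G" "finite S" "S \<subseteq> \<Theta>" "D (snd ` S) {Impl \<psi> (\<alpha> q)}" "fst ` S \<subseteq> G"
      using assms(3) unfolding witnessed_def witnessed_box_def by auto
    then have "D' (snd ` S) {Impl \<psi> q}"
      using agrees_rules[OF agrees_impl[OF assms(1)], of S] alpha_boxfree[OF boxfree_\<psi>] by auto
    then have "D' (snd ` insert (\<phi>, \<psi>) S) {q}" using derivable_impl_iff[OF derivability'] by simp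
    then show ?thesis by (rule cf_box_right_by_context[rotated 2]) (use S in auto)
  qed
qed

lemma backward_axiom:
  assumes "A \<in> \<Gamma>0" "A \<in> \<Delta>0" "represents \<Gamma> \<Delta> R G \<Gamma>0 \<Delta>0"
  shows "cf \<Theta>' D' (\<Gamma> \<union> G) (\<Delta> \<union> Box ` R)"
proof -
  have \<Gamma>0: "A \<in> \<alpha> ` \<Gamma> \<or> witnessed G A" and \<Delta>0: "A \<in> \<alpha> ` \<Delta> \<or> (\<exists>q \<in> R. A \<in> disjuncts q)"
    using assms unfolding represents_def by auto
  show ?thesis
  proof (cases "A \<in> \<alpha> ` \<Delta>")
    case True
    then obtain d where d: "d \<in> \<Delta>" "A = \<alpha> d" by blast
    then obtain g where "g \<in> \<Gamma>" "\<alpha> g = \<alpha> d" using \<Gamma>0 not_witnessed_alpha[of G d] by auto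
    then show ?thesis using d alpha_inj by (intro cf.axiom[of d]) auto
  next
    case False
    then obtain q where q: "q \<in> R" "A \<in> disjuncts q" using \<Delta>0 by blast
    have "A \<notin> \<alpha> ` \<Gamma>" using q(2) unfolding disjuncts_def by auto
    then have "witnessed G A" using \<Gamma>0 by blast
    moreover have "agrees q" using q(1) assms(3) unfolding represents_def by blast
    ultimately have "cf \<Theta>' D' G {Box q}" using witnessed_disjunct q(2) by blast
    then show ?thesis by (rule cf_weaken) (use q in auto)
  qed
qed

lemma backward_left_alpha:
  assumes g: "g \<in> \<Gamma>" "\<forall>p. g \<noteq> Box p"
    and P: "P \<in> left_rule \<Theta> D (\<alpha> g)"
    and IH: "\<forall>(X, Y) \<in> P. back_translatable (X \<union> \<Gamma>0) (Y \<union> \<Delta>0)"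
    and rep: "represents \<Gamma> \<Delta> R G \<Gamma>0 \<Delta>0"
  shows "cf \<Theta>' D' (\<Gamma> \<union> G) (\<Delta> \<union> Box ` R)"
proof -
  obtain P0 where P0: "P0 \<in> left_rule \<Theta>' D' g" "P = map_premises \<alpha> P0"
    using P left_rule_alpha[OF g(2)] by blast
  show ?thesis
  proof (rule cf.left[of g _ P0])
    fix X Y assume XY: "(X, Y) \<in> P0"
    then have translatable: "back_translatable (\<alpha> ` X \<union> \<Gamma>0) (\<alpha> ` Y \<union> \<Delta>0)"
      using IH P0(2) unfolding map_premises_def by fast
    have "\<forall>x \<in> (X \<union> \<Gamma>) \<union> (Y \<union> \<Delta>). \<forall>q \<in> outer_boxes x. agrees q"
      using rep g(1) left_rule_outer_boxes[OF causal' P0(1) XY] unfolding represents_def by blast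
    then have "represents (X \<union> \<Gamma>) (Y \<union> \<Delta>) R G (\<alpha> ` X \<union> \<Gamma>0) (\<alpha> ` Y \<union> \<Delta>0)"
      using rep unfolding represents_def by (auto simp: image_Un)
    then have "cf \<Theta>' D' (X \<union> \<Gamma> \<union> G) (Y \<union> \<Delta> \<union> Box ` R)"
      using translatable unfolding back_translatable_def by blast
    then show "cf \<Theta>' D' (X \<union> (\<Gamma> \<union> G)) (Y \<union> (\<Delta> \<union> Box ` R))" by (simp add: Un_assoc)
  qed (use g P0 in auto)
qed

lemma backward_right_alpha:
  assumes d: "d \<in> \<Delta>" "\<forall>p. d \<noteq> Box p"
    and P: "P \<in> right_rule \<Theta> D (\<alpha> d)"
    and IH: "\<forall>(X, Y) \<in> P. back_translatable (X \<union> \<Gamma>0) (Y \<union> \<Delta>0)"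
    and rep: "represents \<Gamma> \<Delta> R G \<Gamma>0 \<Delta>0"
  shows "cf \<Theta>' D' (\<Gamma> \<union> G) (\<Delta> \<union> Box ` R)"
proof -
  obtain P0 where P0: "P0 \<in> right_rule \<Theta>' D' d" "P = map_premises \<alpha> P0"
    using P right_rule_alpha[OF d(2)] by blast
  show ?thesis
  proof (rule cf.right[of d _ P0])
    fix X Y assume XY: "(X, Y) \<in> P0"
    then have translatable: "back_translatable (\<alpha> ` X \<union> \<Gamma>0) (\<alpha> ` Y \<union> \<Delta>0)"
      using IH P0(2) unfolding map_premises_def by fast
    have "\<forall>x \<in> (X \<union> \<Gamma>) \<union> (Y \<union> \<Delta>). \<forall>q \<in> outer_boxes x. agrees q"
      using rep d(1) right_rule_outer_boxes[OF causal' P0(1) XY] unfolding represents_def by blast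
    then have "represents (X \<union> \<Gamma>) (Y \<union> \<Delta>) R G (\<alpha> ` X \<union> \<Gamma>0) (\<alpha> ` Y \<union> \<Delta>0)"
      using rep unfolding represents_def by (auto simp: image_Un)
    then have "cf \<Theta>' D' (X \<union> \<Gamma> \<union> G) (Y \<union> \<Delta> \<union> Box ` R)"
      using translatable unfolding back_translatable_def by blast
    then show "cf \<Theta>' D' (X \<union> (\<Gamma> \<union> G)) (Y \<union> (\<Delta> \<union> Box ` R))" by (simp add: Un_assoc)
  qed (use d P0 in auto)
qed

text \<open>Left rule on alpha (Box q): decompose Box q in Theta' and follow the disjunct matching the
rule set, which is then witnessed.\<close>

lemma backward_box_left:
  assumes q: "Box q \<in> \<Gamma>"
    and branches: "\<forall>x \<in> disjuncts q. back_translatable (insert x \<Gamma>0) \<Delta>0"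
    and rep: "represents \<Gamma> \<Delta> R G \<Gamma>0 \<Delta>0"
  shows "cf \<Theta>' D' (\<Gamma> \<union> G) (\<Delta> \<union> Box ` R)"
proof (rule cf_box_left[of q])
  show "Box q \<in> \<Gamma> \<union> G" using q by blast
  fix S assume S: "finite S" "S \<subseteq> \<Theta>'" "D' (snd ` S) {q}"
  have agrees: "agrees q" using represents_agrees[OF rep] q by blast
  let ?G = "fst ` S \<union> G"
  have "\<exists>x \<in> disjuncts q. witnessed ?G x"
  proof (cases "(\<phi>, \<psi>) \<in> S")
    case True
    let ?S0 = "S - {(\<phi>, \<psi>)}"
    have "snd ` S = insert \<psi> (snd ` ?S0)" using True by force
    then have "D' (snd ` ?S0) {Impl \<psi> q}" using S(3) derivable_impl_iff[OF derivability'] by simp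
    then have "D (snd ` ?S0) {Impl \<psi> (\<alpha> q)}"
      using agrees_rules[OF agrees_impl[OF agrees], of ?S0] S(2) alpha_boxfree[OF boxfree_\<psi>] by auto
    then have "witnessed_box ?G (Box (Impl \<psi> (\<alpha> q)))" by (rule witnessed_boxI[rotated 2]) (use S in auto)
    moreover have "\<phi> \<in> ?G" using True by force
    ultimately show ?thesis unfolding disjuncts_def witnessed_def by blast
  next
    case False
    then have "S \<subseteq> \<Theta>" using S(2) by blast
    moreover have "D (snd ` S) {\<alpha> q}" using agrees_rules[OF agrees S(2)] S(3) by simp
    ultimately have "witnessed_box ?G (Box (\<alpha> q))" using S(1) by (intro witnessed_boxI) auto
    then show ?thesis unfolding disjuncts_def witnessed_def by blast
  qed
  then obtain x where x: "x \<in> disjuncts q" "witnessed ?G x" by blast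
  have "represents \<Gamma> \<Delta> R ?G (insert x \<Gamma>0) \<Delta>0"
    using rep x(2) witnessed_mono[of G _ ?G] unfolding represents_def by blast
  then have "cf \<Theta>' D' (\<Gamma> \<union> ?G) (\<Delta> \<union> Box ` R)"
    using branches x(1) unfolding back_translatable_def by blast
  then show "cf \<Theta>' D' (fst ` S \<union> (\<Gamma> \<union> G)) (\<Delta> \<union> Box ` R)" by (simp add: Un_left_commute)
qed

text \<open>Left rules on witnessed disjuncts: their contribution is already in G.\<close>

lemma backward_witnessed_left:
  assumes A: "witnessed G A"
    and P: "P \<in> left_rule \<Theta> D A"
    and IH: "\<forall>(X, Y) \<in> P. back_translatable (X \<union> \<Gamma>0) (Y \<union> \<Delta>0)"
    and rep: "represents \<Gamma> \<Delta> R G \<Gamma>0 \<Delta>0"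
  shows "cf \<Theta>' D' (\<Gamma> \<union> G) (\<Delta> \<union> Box ` R)"
proof (cases "witnessed_box G A")
  case True
  then obtain p S where S: "A = Box p" "finite S" "S \<subseteq> \<Theta>" "D (snd ` S) {p}" "fst ` S \<subseteq> G"
    unfolding witnessed_box_def by blast
  then have "(fst ` S, {}) \<in> P" using P by auto
  then have translatable: "back_translatable (fst ` S \<union> \<Gamma>0) \<Delta>0" using IH by auto
  have boxfree: "\<forall>x \<in> fst ` S. boxfree x" using boxfree_rule_parts(1)[of S] S(3) by blast
  then have "\<alpha> ` fst ` S = fst ` S" by (rule alpha_boxfree_set)
  then have "represents (fst ` S \<union> \<Gamma>) \<Delta> R G (fst ` S \<union> \<Gamma>0) \<Delta>0"
    using rep boxfree unfolding represents_def by (auto simp: outer_boxes_boxfree image_Un)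
  then have "cf \<Theta>' D' (fst ` S \<union> \<Gamma> \<union> G) (\<Delta> \<union> Box ` R)"
    using translatable unfolding back_translatable_def by blast
  moreover have "fst ` S \<union> \<Gamma> \<union> G = \<Gamma> \<union> G" using S(5) by blast
  ultimately show ?thesis by simp
next
  case False
  then obtain b where b: "A = Conj \<phi> b" "\<phi> \<in> G" "witnessed_box G b"
    using A unfolding witnessed_def by blast
  then have translatable: "back_translatable ({\<phi>, b} \<union> \<Gamma>0) \<Delta>0" using P IH by auto
  have "represents (insert \<phi> \<Gamma>) \<Delta> R G ({\<phi>, b} \<union> \<Gamma>0) \<Delta>0"
    using rep b(3) alpha_boxfree[OF boxfree_\<phi>] outer_boxes_boxfree[OF boxfree_\<phi>]
    unfolding represents_def witnessed_def by auto
  then have "cf \<Theta>' D' (insert \<phi> \<Gamma> \<union> G) (\<Delta> \<union> Box ` R)"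
    using translatable unfolding back_translatable_def by blast
  then show ?thesis using b(2) by (simp add: insert_absorb)
qed

text \<open>Right rule on alpha (Box q): both disjuncts become right disjuncts for q.\<close>

lemma backward_box_right:
  assumes q: "Box q \<in> \<Delta>"
    and IH: "back_translatable \<Gamma>0 (disjuncts q \<union> \<Delta>0)"
    and rep: "represents \<Gamma> \<Delta> R G \<Gamma>0 \<Delta>0"
  shows "cf \<Theta>' D' (\<Gamma> \<union> G) (\<Delta> \<union> Box ` R)"
proof -
  have "agrees q" using represents_agrees[OF rep] q by blast
  then have "represents \<Gamma> \<Delta> (insert q R) G \<Gamma>0 (disjuncts q \<union> \<Delta>0)"
    using rep unfolding represents_def by auto
  then have "cf \<Theta>' D' (\<Gamma> \<union> G) (\<Delta> \<union> Box ` insert q R)" using IH unfolding back_translatable_def by blast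
  moreover have "\<Delta> \<union> Box ` insert q R = \<Delta> \<union> Box ` R" using q by auto
  ultimately show ?thesis by simp
qed

text \<open>Right rules on the disjuncts of alpha (Box q), q in R: the rule set of Box (alpha q)
derives Box q; the conjunction phi \<and> Box (psi \<longrightarrow> alpha q) derives Box q by phi |> psi.\<close>

lemma backward_box_disjunct_right:
  assumes q: "q \<in> R" and P: "P \<in> right_rule \<Theta> D (Box (\<alpha> q))"
    and IH: "\<forall>(X, Y) \<in> P. back_translatable (X \<union> \<Gamma>0) (Y \<union> \<Delta>0)"
    and rep: "represents \<Gamma> \<Delta> R G \<Gamma>0 \<Delta>0"
  shows "cf \<Theta>' D' (\<Gamma> \<union> G) (\<Delta> \<union> Box ` R)"
proof -
  obtain rs where rs: "set rs \<subseteq> \<Theta>" "D (set (map snd rs)) {\<alpha> q}"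
    and "P = {({}, {conjs (map fst rs)})}" using P by auto
  then have translatable: "back_translatable \<Gamma>0 (insert (conjs (map fst rs)) \<Delta>0)" using IH by simp
  have "boxfree (conjs (map fst rs))" by (rule boxfree_conjs_premises[OF causal rs(1)])
  then have "represents \<Gamma> (insert (conjs (map fst rs)) \<Delta>) R G \<Gamma>0 (insert (conjs (map fst rs)) \<Delta>0)"
    using rep unfolding represents_def by (auto simp: alpha_boxfree outer_boxes_boxfree)
  then have premise: "cf \<Theta>' D' (\<Gamma> \<union> G) (insert (conjs (map fst rs)) (\<Delta> \<union> Box ` R))"
    using translatable unfolding back_translatable_def by fastforce
  have "agrees q" using rep q unfolding represents_def by blast
  then have side: "D' (set (map snd rs)) {q}" using agrees_rules[of q "set rs"] rs by auto
  show ?thesis by (rule cf_box_right[where Side = D', OF _ _ side premise]) (use q rs(1) in auto)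
qed

lemma backward_conj_disjunct_right:
  assumes q: "q \<in> R" and P: "P \<in> right_rule \<Theta> D (Conj \<phi> (Box (Impl \<psi> (\<alpha> q))))"
    and IH: "\<forall>(X, Y) \<in> P. back_translatable (X \<union> \<Gamma>0) (Y \<union> \<Delta>0)"
    and rep: "represents \<Gamma> \<Delta> R G \<Gamma>0 \<Delta>0"
  shows "cf \<Theta>' D' (\<Gamma> \<union> G) (\<Delta> \<union> Box ` R)"
proof -
  have translatable: "back_translatable \<Gamma>0 (insert \<phi> \<Delta>0)"
    "back_translatable \<Gamma>0 (insert (Box (Impl \<psi> (\<alpha> q))) \<Delta>0)" using P IH by auto
  have "represents \<Gamma> (insert \<phi> \<Delta>) R G \<Gamma>0 (insert \<phi> \<Delta>0)"
    using rep alpha_boxfree[OF boxfree_\<phi>] outer_boxes_boxfree[OF boxfree_\<phi>]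
    unfolding represents_def by auto
  then have left: "cf \<Theta>' D' (\<Gamma> \<union> G) (insert \<phi> (\<Delta> \<union> Box ` R))"
    using translatable(1) unfolding back_translatable_def by fastforce
  have "agrees q" using rep q unfolding represents_def by blast
  moreover have "Box (Impl \<psi> (\<alpha> q)) \<in> disjuncts (Impl \<psi> q)"
    using alpha_boxfree[OF boxfree_\<psi>] unfolding disjuncts_def by simp
  ultimately have "represents \<Gamma> \<Delta> (insert (Impl \<psi> q) R) G \<Gamma>0 (insert (Box (Impl \<psi> (\<alpha> q))) \<Delta>0)"
    using rep agrees_impl unfolding represents_def by auto
  then have right: "cf \<Theta>' D' (\<Gamma> \<union> G) (insert (Box (Impl \<psi> q)) (\<Delta> \<union> Box ` R))"
    using translatable(2) unfolding back_translatable_def by fastforce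
  have "cf \<Theta>' D' (\<Gamma> \<union> G) (insert (Box q) (\<Delta> \<union> Box ` R))"
    by (rule box_right_by_rule[OF causal' derivability' _ left right]) simp
  then show ?thesis using q by (simp add: insert_absorb)
qed

lemma backward_left_step:
  assumes A: "A \<in> \<Gamma>0" and P: "P \<in> left_rule \<Theta> D A"
    and IH: "\<forall>(X, Y) \<in> P. back_translatable (X \<union> \<Gamma>0) (Y \<union> \<Delta>0)"
  shows "back_translatable \<Gamma>0 \<Delta>0"
  unfolding back_translatable_def
proof (intro allI impI)
  fix \<Gamma> \<Delta> R G assume rep: "represents \<Gamma> \<Delta> R G \<Gamma>0 \<Delta>0"
  then consider (witnessed) "witnessed G A" | (translated) g where "g \<in> \<Gamma>" "A = \<alpha> g"
    using A unfolding represents_def by blast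
  then show "cf \<Theta>' D' (\<Gamma> \<union> G) (\<Delta> \<union> Box ` R)"
  proof cases
    case witnessed
    then show ?thesis using backward_witnessed_left[OF _ P IH rep] by blast
  next
    case (translated g)
    show ?thesis
    proof (cases "\<exists>q. g = Box q")
      case True
      then obtain q where q: "g = Box q" by blast
      then have "\<forall>x \<in> disjuncts q. back_translatable (insert x \<Gamma>0) \<Delta>0"
        using IH P translated unfolding disjuncts_def by auto
      then show ?thesis using backward_box_left translated(1) q rep by blast
    next
      case False
      then show ?thesis using backward_left_alpha translated P IH rep by blast
    qed
  qed
qed

lemma backward_right_step:
  assumes A: "A \<in> \<Delta>0" and P: "P \<in> right_rule \<Theta> D A"
    and IH: "\<forall>(X, Y) \<in> P. back_translatable (X \<union> \<Gamma>0) (Y \<union> \<Delta>0)"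
  shows "back_translatable \<Gamma>0 \<Delta>0"
  unfolding back_translatable_def
proof (intro allI impI)
  fix \<Gamma> \<Delta> R G assume rep: "represents \<Gamma> \<Delta> R G \<Gamma>0 \<Delta>0"
  then consider (disjunct) q where "q \<in> R" "A \<in> disjuncts q" | (translated) d where "d \<in> \<Delta>" "A = \<alpha> d"
    using A unfolding represents_def by blast
  then show "cf \<Theta>' D' (\<Gamma> \<union> G) (\<Delta> \<union> Box ` R)"
  proof cases
    case (disjunct q)
    then consider "A = Box (\<alpha> q)" | "A = Conj \<phi> (Box (Impl \<psi> (\<alpha> q)))"
      unfolding disjuncts_def by blast
    then show ?thesis
      using backward_box_disjunct_right backward_conj_disjunct_right disjunct(1) P IH rep by metis
  next
    case (translated d)
    show ?thesis
    proof (cases "\<exists>q. d = Box q")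
      case True
      then obtain q where q: "d = Box q" by blast
      then have "back_translatable \<Gamma>0 (disjuncts q \<union> \<Delta>0)"
        using IH P translated unfolding disjuncts_def by auto
      then show ?thesis using backward_box_right translated(1) q rep by blast
    next
      case False
      then show ?thesis using backward_right_alpha translated P IH rep by blast
    qed
  qed
qed

theorem translate_backward: "cf \<Theta> D \<Gamma>0 \<Delta>0 \<Longrightarrow> back_translatable \<Gamma>0 \<Delta>0"
proof (induction rule: cf.induct)
  case (axiom A \<Gamma>0 \<Delta>0)
  then show ?case unfolding back_translatable_def using backward_axiom by blast
next
  case (left A \<Gamma>0 P \<Delta>0)
  then show ?case by (intro backward_left_step) blast+
next
  case (right A \<Delta>0 P \<Gamma>0)
  then show ?case by (intro backward_right_step) blast+
qed

text \<open>The side conditions agree for every formula, by induction on box depth: the sequents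
B |- q involve only boxes of smaller depth.\<close>

lemma all_agree: "agrees q"
proof (induction q rule: measure_induct_rule[where f = box_depth])
  case (less q)
  show ?case unfolding agrees_def
  proof (intro allI impI)
    fix B :: "'a fm set" assume B: "\<forall>b \<in> B. boxfree b"
    have inner: "\<forall>x \<in> B \<union> {q}. \<forall>q' \<in> outer_boxes x. agrees q'"
      using B less.IH outer_boxes_depth by (auto simp: outer_boxes_boxfree)
    have fixed: "\<alpha> ` B = B" by (rule alpha_boxfree_set[OF B])
    show "D' B {q} \<longleftrightarrow> D B {\<alpha> q}"
    proof
      assume "D' B {q}"
      then have "cf \<Theta>' D' B {q}" using derivability_cut_free[OF causal' derivability'] by blast
      then have "cf \<Theta> D (\<alpha> ` B) (\<alpha> ` {q})" using translate_forward inner by blast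
      then show "D B {\<alpha> q}" using fixed derivability_cut_free[OF causal derivability] by simp
    next
      assume "D B {\<alpha> q}"
      then have "back_translatable B {\<alpha> q}"
        using translate_backward derivability_cut_free[OF causal derivability] by blast
      moreover have "represents B {q} {} {} B {\<alpha> q}" using inner fixed unfolding represents_def by auto
      ultimately have "cf \<Theta>' D' (B \<union> {}) ({q} \<union> Box ` {})" unfolding back_translatable_def by blast
      then show "D' B {q}" using derivability_cut_free[OF causal' derivability'] by simp
    qed
  qed
qed

theorem translation_correct: "D' \<Gamma> \<Delta> \<longleftrightarrow> D (\<alpha> ` \<Gamma>) (\<alpha> ` \<Delta>)"
proof
  assume "D' \<Gamma> \<Delta>"
  then have "cf \<Theta>' D' \<Gamma> \<Delta>" using derivability_cut_free[OF causal' derivability'] by blast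
  then have "cf \<Theta> D (\<alpha> ` \<Gamma>) (\<alpha> ` \<Delta>)" using translate_forward all_agree by blast
  then show "D (\<alpha> ` \<Gamma>) (\<alpha> ` \<Delta>)" using derivability_cut_free[OF causal derivability] by blast
next
  assume "D (\<alpha> ` \<Gamma>) (\<alpha> ` \<Delta>)"
  then have "back_translatable (\<alpha> ` \<Gamma>) (\<alpha> ` \<Delta>)"
    using translate_backward derivability_cut_free[OF causal derivability] by blast
  moreover have "represents \<Gamma> \<Delta> {} {} (\<alpha> ` \<Gamma>) (\<alpha> ` \<Delta>)"
    using all_agree unfolding represents_def by auto
  ultimately have "cf \<Theta>' D' (\<Gamma> \<union> {}) (\<Delta> \<union> Box ` {})" unfolding back_translatable_def by blast
  then show "D' \<Gamma> \<Delta>" using derivability_cut_free[OF causal' derivability'] by simp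
qed

end

theorem mainTheorem18:
  fixes \<Theta> :: "'a causal_theory" and \<phi> \<psi> :: "'a fm"
    and D D' :: "'a fm set \<Rightarrow> 'a fm set \<Rightarrow> bool"
    and \<Gamma> \<Delta> :: "'a fm set"
  assumes "causal_theory \<Theta>" and "boxfree \<phi>" and "boxfree \<psi>"
    and "is_derivability \<Theta> D"
    and "is_derivability (insert (\<phi>, \<psi>) \<Theta>) D'"
  shows "D' \<Gamma> \<Delta> \<longleftrightarrow> D (alpha \<phi> \<psi> ` \<Gamma>) (alpha \<phi> \<psi> ` \<Delta>)"
proof -
  interpret rule_extension \<Theta> \<phi> \<psi> D D' using assms by unfold_locales
  show ?thesis by (rule translation_correct)
qed

end
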